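(* Consider the control-affine system $\dot{x} = f(x) + g(x)u$ with $x \in \mathcal{X} \subseteq \mathbb{R}^n$, $u \in \mathcal{U} \subseteq \mathbb{R}^m$, where $f,g$ are continuously differentiable and $\mathcal{U}$ is a convex polytope. Let $h:\mathcal{X}\to\mathbb{R}$ be continuously differentiable, $\mathcal{C}_S=\{x: h(x)\ge 0\}$, let $k_b$ be a backup controller with backup set $\mathcal{C}_B=\{x: h_b(x)\ge0\}\subseteq\mathcal{C}_S$ (see context), let $k_e:\mathcal{X}\to\mathcal{U}$ be continuously differentiable, let $\eta:\mathcal{X}\to[0,1]$ be continuously differentiable with $\eta(x)=1$ for all $x\in\mathcal{C}_B$, and let $k_s(x) = (1-\eta(x))k_e(x)+\eta(x)k_b(x)$. Let $\phi_s(\tau,x)$ denote the flow of $\dot x = f_s(x) := f(x)+g(x)k_s(x)$, i.e. $\frac{\partial}{\partial\tau}\phi_s(\tau,x) = f_s(\phi_s(\tau,x))$, $\phi_s(0,x)=x$. Fix $T>0$ and define $$\mathcal{C}_I^\star = \{x\in\mathcal{X} : h(\phi_s(\tau,x))\ge 0 \ \forall \tau\in[0,T],\ h_b(\phi_s(T,x))\ge 0\}.$$ Then $\mathcal{C}_I^\star$ is controlled invariant, and $k_s$ renders $\mathcal{C}_I^\star$ forward invariant along $\dot x = f_s(x)$: for every $x\in\mathcal{C}_I^\star$, $\phi_s(\tau,x)\in\mathcal{C}_I^\star\subseteq\mathcal{C}_S$ for all $\tau\ge 0$.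
   Context: A set is forward invariant along a closed-loop system if solutions starting in it remain in it for all future times; a set is controlled invariant if there exists a controller $k:\mathcal{X}\to\mathcal{U}$ rendering it forward invariant for $\dot x = f(x)+g(x)k(x)$. A backup controller is a continuously differentiable $k_b:\mathcal{X}\to\mathcal{U}$ rendering $\mathcal{C}_B=\{x\in\mathcal{X}: h_b(x)\ge0\}\subseteq\mathcal{C}_S$ forward invariant, where $h_b$ is continuously differentiable with $\nabla h_b(x)\neq0$ on $\partial\mathcal{C}_B$. The flow $\phi_s(\tau,x)$ is treated as defined for all $\tau\ge0$ (the paper asserts that continuous differentiability of $\eta$ admits global solutions). *)

theory Defs
  imports "HOL-Analysis.Analysis"
begin

definition C1_on :: "'a::real_normed_vector set \<Rightarrow> ('a \<Rightarrow> 'b::real_normed_vector) \<Rightarrow> bool" where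
  "C1_on X f \<longleftrightarrow> (\<exists>f'. (\<forall>x\<in>X. (f has_derivative blinfun_apply (f' x)) (at x)) \<and> continuous_on X f')"

definition forward_invariant :: "('a::real_normed_vector \<Rightarrow> 'a) \<Rightarrow> 'a set \<Rightarrow> 'a set \<Rightarrow> bool" where
  "forward_invariant F X S \<longleftrightarrow>
     (\<forall>x0\<in>S. \<forall>t\<ge>0. \<forall>\<gamma>. \<gamma> 0 = x0 \<and>
        (\<forall>s\<in>{0..t}. \<gamma> s \<in> X \<and> (\<gamma> has_vector_derivative F (\<gamma> s)) (at s within {0..t}))
        \<longrightarrow> (\<forall>s\<in>{0..t}. \<gamma> s \<in> S))"

definition controlled_invariant ::
  "(real^'n \<Rightarrow> real^'n) \<Rightarrow> (real^'n \<Rightarrow> real^'m^'n) \<Rightarrow> (real^'m) set \<Rightarrow> (real^'n) set \<Rightarrow> (real^'n) set \<Rightarrow> bool" where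
  "controlled_invariant f g U X S \<longleftrightarrow>
     (\<exists>k. (\<forall>x\<in>X. k x \<in> U) \<and> forward_invariant (\<lambda>x. f x + g x *v k x) X S)"

definition backup_controller ::
  "(real^'n \<Rightarrow> real^'n) \<Rightarrow> (real^'n \<Rightarrow> real^'m^'n) \<Rightarrow> (real^'m) set \<Rightarrow> (real^'n) set \<Rightarrow> (real^'n) set \<Rightarrow> (real^'n \<Rightarrow> real^'m) \<Rightarrow> bool" where
  "backup_controller f g U X CB kb \<longleftrightarrow>
     C1_on X kb \<and> (\<forall>x\<in>X. kb x \<in> U) \<and> forward_invariant (\<lambda>x. f x + g x *v kb x) X CB"

end

theory Submission
  imports Defs
begin

(* Since f, g, k_e, k_b and eta are C^1, the closed-loop field f_s and the backup field are
   locally Lipschitz, so their solutions exist locally (Picard iteration) and are unique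
   (an estimate on short intervals, propagated along [0, oo) by real induction).  Uniqueness
   identifies every solution with the flow and gives phi s (phi a x) = phi (a + s) x.
   On C_B we have eta = 1, so f_s agrees with the backup field there: from a point of C_B the
   flow coincides locally with a backup solution, which stays in C_B; as C_B is closed, real
   induction makes C_B invariant under the flow.  A point of C_I* is therefore safe on [0, T]
   and in C_B from time T on, hence safe forever, and shifting time shows that C_I* is
   invariant under the flow, which by uniqueness is forward invariance. *)

definition locally_lipschitz_on :: "'a::metric_space set \<Rightarrow> ('a \<Rightarrow> 'b::metric_space) \<Rightarrow> bool" where
  "locally_lipschitz_on X F \<longleftrightarrow> (\<forall>z\<in>X. \<exists>r>0. \<exists>L. L-lipschitz_on (cball z r \<inter> X) F)"

lemma locally_lipschitz_on_openE:
  assumes "locally_lipschitz_on X F" "open X" "z \<in> X"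
  obtains r L where "r > 0" "cball z r \<subseteq> X" "L-lipschitz_on (cball z r) F"
proof -
  obtain r1 L where "r1 > 0" and L: "L-lipschitz_on (cball z r1 \<inter> X) F"
    using assms(1,3) unfolding locally_lipschitz_on_def by blast
  moreover obtain r2 where "r2 > 0" "cball z r2 \<subseteq> X"
    using assms(2,3) open_contains_cball by blast
  moreover have "cball z (min r1 r2) \<subseteq> cball z r1 \<inter> X"
    using \<open>cball z r2 \<subseteq> X\<close> by auto
  ultimately have "min r1 r2 > 0" "cball z (min r1 r2) \<subseteq> X"
    "L-lipschitz_on (cball z (min r1 r2)) F"
    by (auto intro: lipschitz_on_subset[OF L])
  then show thesis by (rule that)
qed

lemma C1_on_imp_locally_lipschitz_on:
  fixes F :: "'a::euclidean_space \<Rightarrow> 'b::real_normed_vector"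
  assumes "open X" "C1_on X F"
  shows "locally_lipschitz_on X F"
  unfolding locally_lipschitz_on_def
proof
  fix z assume "z \<in> X"
  obtain F' where F': "\<And>x. x \<in> X \<Longrightarrow> (F has_derivative blinfun_apply (F' x)) (at x)"
    and cont: "continuous_on X F'"
    using assms(2) unfolding C1_on_def by blast
  obtain r where r: "r > 0" "cball z r \<subseteq> X"
    using assms(1) \<open>z \<in> X\<close> open_contains_cball by blast
  have "compact (F' ` cball z r)"
    using cont r(2) by (meson compact_cball compact_continuous_image continuous_on_subset)
  then obtain B where B: "B > 0" "\<And>x. x \<in> cball z r \<Longrightarrow> norm (F' x) \<le> B"
    by (auto dest!: compact_imp_bounded simp: bounded_pos)
  have "B-lipschitz_on (cball z r) F"
    using F' r(2) B
    by (intro bounded_derivative_imp_lipschitz[where f' = "\<lambda>x. blinfun_apply (F' x)"])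
      (auto intro!: has_derivative_at_withinI F' simp: norm_blinfun.rep_eq[symmetric] subset_iff)
  then show "\<exists>r>0. \<exists>L. L-lipschitz_on (cball z r \<inter> X) F"
    using r(1) by (blast intro: lipschitz_on_subset)
qed

lemma C1_on_imp_continuous_on: "C1_on X F \<Longrightarrow> continuous_on X F"
  unfolding C1_on_def
  by (meson continuous_at_imp_continuous_on has_derivative_continuous)

lemma locally_lipschitz_on_binop:
  assumes F: "locally_lipschitz_on X F" and G: "locally_lipschitz_on X G"
    and binop: "\<And>S L M. bounded S \<Longrightarrow> L-lipschitz_on S F \<Longrightarrow> M-lipschitz_on S G
      \<Longrightarrow> \<exists>N. N-lipschitz_on S (\<lambda>x. H (F x) (G x))"
  shows "locally_lipschitz_on X (\<lambda>x. H (F x) (G x))"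
  unfolding locally_lipschitz_on_def
proof
  fix z assume "z \<in> X"
  obtain r1 L where "r1 > 0" and L: "L-lipschitz_on (cball z r1 \<inter> X) F"
    using F \<open>z \<in> X\<close> unfolding locally_lipschitz_on_def by blast
  obtain r2 M where "r2 > 0" and M: "M-lipschitz_on (cball z r2 \<inter> X) G"
    using G \<open>z \<in> X\<close> unfolding locally_lipschitz_on_def by blast
  let ?S = "cball z (min r1 r2) \<inter> X"
  have "L-lipschitz_on ?S F" "M-lipschitz_on ?S G"
    by (auto intro: lipschitz_on_subset[OF L] lipschitz_on_subset[OF M])
  then have "\<exists>N. N-lipschitz_on ?S (\<lambda>x. H (F x) (G x))"
    by (intro binop) auto
  then show "\<exists>r>0. \<exists>N. N-lipschitz_on (cball z r \<inter> X) (\<lambda>x. H (F x) (G x))"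
    using \<open>r1 > 0\<close> \<open>r2 > 0\<close> by (metis min_less_iff_conj)
qed

lemma locally_lipschitz_on_add:
  fixes F G :: "'a::metric_space \<Rightarrow> 'b::real_normed_vector"
  assumes "locally_lipschitz_on X F" "locally_lipschitz_on X G"
  shows "locally_lipschitz_on X (\<lambda>x. F x + G x)"
  using assms by (rule locally_lipschitz_on_binop) (blast intro: lipschitz_on_add)

lemma locally_lipschitz_on_diff:
  fixes F G :: "'a::metric_space \<Rightarrow> 'b::real_normed_vector"
  assumes "locally_lipschitz_on X F" "locally_lipschitz_on X G"
  shows "locally_lipschitz_on X (\<lambda>x. F x - G x)"
  using assms by (rule locally_lipschitz_on_binop) (blast intro: lipschitz_on_diff)

lemma lipschitz_on_bounded_image:
  assumes "L-lipschitz_on S F" "bounded S"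
  shows "bounded (F ` S)"
proof (cases "S = {}")
  case False
  then obtain a where "a \<in> S" by blast
  obtain B where B: "\<And>x. x \<in> S \<Longrightarrow> dist a x \<le> B"
    using bounded_any_center assms(2) by blast
  have "dist (F a) (F x) \<le> L * B" if "x \<in> S" for x
    using lipschitz_onD[OF assms(1) \<open>a \<in> S\<close> that] B[OF that] lipschitz_on_nonneg[OF assms(1)]
    by (meson mult_left_mono order_trans)
  then show ?thesis unfolding bounded_def by blast
qed simp

lemma lipschitz_on_bounded_bilinear:
  fixes bop :: "'b::real_normed_vector \<Rightarrow> 'c::real_normed_vector \<Rightarrow> 'd::real_normed_vector"
    and F :: "'a::metric_space \<Rightarrow> 'b" and G :: "'a \<Rightarrow> 'c"
  assumes bop: "bounded_bilinear bop" and "bounded S"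
    and F: "L-lipschitz_on S F" and G: "M-lipschitz_on S G"
  shows "\<exists>N. N-lipschitz_on S (\<lambda>x. bop (F x) (G x))"
proof -
  obtain BF where BF: "BF > 0" "\<And>x. x \<in> S \<Longrightarrow> norm (F x) \<le> BF"
    using lipschitz_on_bounded_image[OF F \<open>bounded S\<close>] by (auto simp: bounded_pos)
  obtain BG where BG: "BG > 0" "\<And>x. x \<in> S \<Longrightarrow> norm (G x) \<le> BG"
    using lipschitz_on_bounded_image[OF G \<open>bounded S\<close>] by (auto simp: bounded_pos)
  obtain K where K: "K > 0" "\<And>a b. norm (bop a b) \<le> norm a * norm b * K"
    using bounded_bilinear.pos_bounded[OF bop] by blast
  have L: "L \<ge> 0" and M: "M \<ge> 0"
    using F G by (auto dest: lipschitz_on_nonneg)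
  have "dist (bop (F x) (G x)) (bop (F y) (G y)) \<le> (K * (L * BG + BF * M)) * dist x y"
    if "x \<in> S" "y \<in> S" for x y
  proof -
    have "bop (F x) (G x) - bop (F y) (G y) = bop (F x - F y) (G x) + bop (F y) (G x - G y)"
      by (simp add: bounded_bilinear.diff_left[OF bop] bounded_bilinear.diff_right[OF bop])
    then have "dist (bop (F x) (G x)) (bop (F y) (G y))
        \<le> norm (F x - F y) * norm (G x) * K + norm (F y) * norm (G x - G y) * K"
      by (metis dist_norm K(2) add_mono norm_triangle_le)
    also have "\<dots> \<le> (L * dist x y) * BG * K + BF * (M * dist x y) * K"
      using lipschitz_onD[OF F that] lipschitz_onD[OF G that] BF BG K(1) L M that
      by (intro add_mono mult_right_mono mult_mono) (auto simp: dist_norm)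
    finally show ?thesis by (simp add: algebra_simps)
  qed
  then show ?thesis
    using K(1) BF(1) BG(1) L M by (intro exI[of _ "K * (L * BG + BF * M)"] lipschitz_onI) auto
qed

lemma locally_lipschitz_on_bounded_bilinear:
  fixes bop :: "'b::real_normed_vector \<Rightarrow> 'c::real_normed_vector \<Rightarrow> 'd::real_normed_vector"
    and F :: "'a::metric_space \<Rightarrow> 'b" and G :: "'a \<Rightarrow> 'c"
  assumes "bounded_bilinear bop" "locally_lipschitz_on X F" "locally_lipschitz_on X G"
  shows "locally_lipschitz_on X (\<lambda>x. bop (F x) (G x))"
  using assms(2,3) by (rule locally_lipschitz_on_binop) (rule lipschitz_on_bounded_bilinear[OF assms(1)])

lemma bounded_bilinear_matrix_vector_mult:
  "bounded_bilinear ((*v) :: real^'m^'n \<Rightarrow> real^'m \<Rightarrow> real^'n)"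
  unfolding bilinear_conv_bounded_bilinear[symmetric] bilinear_def
  by (auto simp: linear_iff matrix_vector_mult_add_rdistrib matrix_vector_right_distrib
        matrix_vector_mult_scaleR vec_eq_iff matrix_vector_mult_def sum_distrib_left algebra_simps sum.distrib)

definition ode_solution_on :: "('a::real_normed_vector \<Rightarrow> 'a) \<Rightarrow> 'a set \<Rightarrow> real \<Rightarrow> (real \<Rightarrow> 'a) \<Rightarrow> bool" where
  "ode_solution_on F X t \<gamma> \<longleftrightarrow>
     (\<forall>s\<in>{0..t}. \<gamma> s \<in> X \<and> (\<gamma> has_vector_derivative F (\<gamma> s)) (at s within {0..t}))"

lemma forward_invariant_iff_ode_solution_on:
  "forward_invariant F X S \<longleftrightarrow>
     (\<forall>x0\<in>S. \<forall>t\<ge>0. \<forall>\<gamma>. \<gamma> 0 = x0 \<and> ode_solution_on F X t \<gamma> \<longrightarrow> (\<forall>s\<in>{0..t}. \<gamma> s \<in> S))"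
  unfolding forward_invariant_def ode_solution_on_def ..

lemma ode_solution_on_continuous_on:
  "ode_solution_on F X t \<gamma> \<Longrightarrow> continuous_on {0..t} \<gamma>"
  unfolding ode_solution_on_def continuous_on_eq_continuous_within
  using has_vector_derivative_continuous by blast

lemma ode_solution_on_subinterval:
  assumes "ode_solution_on F X t \<gamma>" "t' \<le> t"
  shows "ode_solution_on F X t' \<gamma>"
  unfolding ode_solution_on_def
proof
  fix s assume "s \<in> {0..t'}"
  then have "s \<in> {0..t}" "{0..t'} \<subseteq> {0..t}" using assms(2) by auto
  then show "\<gamma> s \<in> X \<and> (\<gamma> has_vector_derivative F (\<gamma> s)) (at s within {0..t'})"
    using assms(1) unfolding ode_solution_on_def by (blast intro: has_vector_derivative_within_subset)
qed

lemma real_nonneg_induct: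
  fixes P :: "real \<Rightarrow> bool"
  assumes zero: "P 0"
    and closed: "\<And>s. s > 0 \<Longrightarrow> \<forall>u\<in>{0..<s}. P u \<Longrightarrow> P s"
    and step: "\<And>s. s \<ge> 0 \<Longrightarrow> \<forall>u\<in>{0..s}. P u \<Longrightarrow> \<exists>d>0. \<forall>u\<in>{s..s+d}. P u"
    and "s \<ge> 0"
  shows "P s"
proof (rule ccontr)
  assume "\<not> P s"
  define S where "S = {a. a \<ge> 0 \<and> (\<forall>u\<in>{0..a}. P u)}"
  have "0 \<in> S" using zero by (simp add: S_def)
  have "a < s" if "a \<in> S" for a
    using that \<open>\<not> P s\<close> \<open>s \<ge> 0\<close> by (force simp: S_def)
  then have bdd: "bdd_above S" by (meson bdd_above.I less_imp_le)
  define t where "t = Sup S"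
  have "t \<ge> 0" unfolding t_def using \<open>0 \<in> S\<close> bdd by (rule cSup_upper)
  have below: "P u" if u: "0 \<le> u" "u < t" for u
  proof -
    have "S \<noteq> {}" using \<open>0 \<in> S\<close> by blast
    then obtain a where "a \<in> S" "u < a"
      using less_cSup_iff[of S u] bdd u by (auto simp: t_def)
    then show ?thesis using u by (auto simp: S_def)
  qed
  have "P t"
    using \<open>t \<ge> 0\<close> zero closed below by (cases "t = 0") auto
  then have "\<forall>u\<in>{0..t}. P u"
    using below by (metis atLeastAtMost_iff order_less_le)
  then obtain d where "d > 0" "\<forall>u\<in>{t..t+d}. P u" "\<forall>u\<in>{0..t}. P u"
    using step \<open>t \<ge> 0\<close> by blast
  then have "t + d \<in> S"
    using \<open>t \<ge> 0\<close> by (auto simp: S_def)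
  then have "t + d \<le> t" unfolding t_def using bdd by (rule cSup_upper)
  then show False using \<open>d > 0\<close> by simp
qed

lemma zero_if_norm_derivative_le:
  fixes e :: "real \<Rightarrow> 'a::real_normed_vector"
  assumes deriv: "\<And>u. u \<in> {a..b} \<Longrightarrow> (e has_vector_derivative e' u) (at u within {a..b})"
    and bound: "\<And>u. u \<in> {a..b} \<Longrightarrow> norm (e' u) \<le> L * norm (e u)"
    and "e a = 0" "L \<ge> 0" "L * (b - a) < 1" "u \<in> {a..b}"
  shows "e u = 0"
proof -
  have "continuous_on {a..b} e"
    using deriv has_vector_derivative_continuous continuous_on_eq_continuous_within by blast
  then have "continuous_on {a..b} (\<lambda>w. norm (e w))"
    by (rule continuous_on_norm)
  then obtain v where v: "v \<in> {a..b}" and max: "\<And>w. w \<in> {a..b} \<Longrightarrow> norm (e w) \<le> norm (e v)"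
    using continuous_attains_sup[OF compact_Icc] \<open>u \<in> {a..b}\<close> by (metis empty_iff)
  let ?m = "norm (e v)"
  have "norm (e w - e a) \<le> (L * ?m) * norm (w - a)" if "w \<in> {a..b}" for w
  proof (rule differentiable_bound[OF convex_real_interval(5) _ _ that])
    fix x assume x: "x \<in> {a..b}"
    show "(e has_derivative (\<lambda>h. h *\<^sub>R e' x)) (at x within {a..b})"
      using deriv[OF x] by (simp add: has_vector_derivative_def)
    have "onorm (\<lambda>h. h *\<^sub>R e' x) = norm (e' x)"
      using onorm_scaleR_left[OF bounded_linear_ident] by (simp add: onorm_id)
    also have "\<dots> \<le> L * ?m"
      using bound[OF x] max[OF x] \<open>L \<ge> 0\<close> by (meson mult_left_mono order_trans)
    finally show "onorm (\<lambda>h. h *\<^sub>R e' x) \<le> L * ?m" .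
  qed (use v in auto)
  then have "?m \<le> (L * ?m) * (v - a)"
    using v \<open>e a = 0\<close> by simp
  also have "\<dots> \<le> (L * ?m) * (b - a)"
    using v \<open>L \<ge> 0\<close> by (intro mult_left_mono) auto
  finally have "?m * (1 - L * (b - a)) \<le> 0"
    by (simp add: algebra_simps)
  then have "?m = 0"
    using \<open>L * (b - a) < 1\<close> by (simp add: mult_le_0_iff)
  then show ?thesis
    using max[OF \<open>u \<in> {a..b}\<close>] by simp
qed

lemma continuous_on_closedin_endpoint:
  fixes a b :: real
  assumes "continuous_on {a..b} \<gamma>" "\<gamma> ` {a..b} \<subseteq> X" "closedin (top_of_set X) B"
    and "a < b" "\<forall>u\<in>{a..<b}. \<gamma> u \<in> B"
  shows "\<gamma> b \<in> B"
proof -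
  have "closedin (top_of_set {a..b}) ({a..b} \<inter> \<gamma> -` B)"
    using assms(1-3) by (intro continuous_closedin_preimage_gen) auto
  then have "closed ({a..b} \<inter> \<gamma> -` B)"
    by (rule closedin_closed_trans) simp
  moreover have "{a..<b} \<subseteq> {a..b} \<inter> \<gamma> -` B"
    using assms(5) by auto
  ultimately have "closure {a..<b} \<subseteq> {a..b} \<inter> \<gamma> -` B"
    by (rule closure_minimal[rotated])
  then show ?thesis
    using \<open>a < b\<close> by (auto simp: closure_atLeastLessThan subset_iff)
qed

lemma closedin_superlevel_set:
  fixes h :: "'a::topological_space \<Rightarrow> real"
  assumes "continuous_on X h"
  shows "closedin (top_of_set X) {x\<in>X. h x \<ge> 0}"
  using continuous_closedin_preimage[OF assms closed_atLeast, of 0]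
  by (simp add: vimage_def Int_def)

lemma ode_solution_on_unique_local:
  assumes "open X" "locally_lipschitz_on X F"
    and sol1: "ode_solution_on F X t \<gamma>1" and sol2: "ode_solution_on F X t \<gamma>2"
    and "0 \<le> s" "s < t" "\<gamma>1 s = \<gamma>2 s"
  shows "\<exists>d>0. \<forall>u\<in>{s..s+d}. \<gamma>1 u = \<gamma>2 u"
proof -
  have s: "s \<in> {0..t}" using \<open>0 \<le> s\<close> \<open>s < t\<close> by simp
  then have "\<gamma>1 s \<in> X" using sol1 by (simp add: ode_solution_on_def)
  then obtain r L where "r > 0" and L: "L-lipschitz_on (cball (\<gamma>1 s) r) F"
    using locally_lipschitz_on_openE assms(1,2) by metis
  obtain d1 where "d1 > 0" and d1: "\<forall>u\<in>{0..t}. dist u s < d1 \<longrightarrow> dist (\<gamma>1 u) (\<gamma>1 s) < r"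
    using ode_solution_on_continuous_on[OF sol1] s \<open>r > 0\<close> unfolding continuous_on_iff by blast
  obtain d2 where "d2 > 0" and d2: "\<forall>u\<in>{0..t}. dist u s < d2 \<longrightarrow> dist (\<gamma>2 u) (\<gamma>2 s) < r"
    using ode_solution_on_continuous_on[OF sol2] s \<open>r > 0\<close> unfolding continuous_on_iff by blast
  define d where "d = min (t - s) (min (d1 / 2) (min (d2 / 2) (1 / (2 * (L + 1)))))"
  have L0: "L \<ge> 0" using L by (rule lipschitz_on_nonneg)
  have "d > 0" using \<open>d1 > 0\<close> \<open>d2 > 0\<close> \<open>s < t\<close> L0 by (simp add: d_def)
  have sub: "{s..s+d} \<subseteq> {0..t}" using \<open>0 \<le> s\<close> by (auto simp: d_def)
  have ball: "\<gamma>1 u \<in> cball (\<gamma>1 s) r" "\<gamma>2 u \<in> cball (\<gamma>1 s) r" if "u \<in> {s..s+d}" for u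
  proof -
    have "dist u s < d1" "dist u s < d2"
      using that \<open>d > 0\<close> \<open>d1 > 0\<close> \<open>d2 > 0\<close> by (auto simp: d_def dist_real_def)
    then show "\<gamma>1 u \<in> cball (\<gamma>1 s) r" "\<gamma>2 u \<in> cball (\<gamma>1 s) r"
      using d1 d2 sub that \<open>\<gamma>1 s = \<gamma>2 s\<close> by (auto simp: dist_commute less_imp_le subset_iff)
  qed
  have "L * d < 1"
  proof -
    have "L * d \<le> L * (1 / (2 * (L + 1)))" using L0 by (intro mult_left_mono) (auto simp: d_def)
    also have "\<dots> < 1" using L0 by (simp add: field_simps)
    finally show ?thesis .
  qed
  have "\<gamma>1 u - \<gamma>2 u = 0" if "u \<in> {s..s+d}" for u
  proof (rule zero_if_norm_derivative_le[where e' = "\<lambda>u. F (\<gamma>1 u) - F (\<gamma>2 u)" and L = L])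
    fix v assume v: "v \<in> {s..s+d}"
    then have "v \<in> {0..t}" using sub by blast
    then have "(\<gamma>1 has_vector_derivative F (\<gamma>1 v)) (at v within {0..t})"
      "(\<gamma>2 has_vector_derivative F (\<gamma>2 v)) (at v within {0..t})"
      using sol1 sol2 by (simp_all add: ode_solution_on_def)
    from has_vector_derivative_diff[OF this] sub
    show "((\<lambda>u. \<gamma>1 u - \<gamma>2 u) has_vector_derivative F (\<gamma>1 v) - F (\<gamma>2 v)) (at v within {s..s+d})"
      by (rule has_vector_derivative_within_subset)
    show "norm (F (\<gamma>1 v) - F (\<gamma>2 v)) \<le> L * norm (\<gamma>1 v - \<gamma>2 v)"
      using lipschitz_onD[OF L ball[OF v]] by (simp add: dist_norm)
  qed (use that L0 \<open>L * d < 1\<close> \<open>\<gamma>1 s = \<gamma>2 s\<close> in auto)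
  then show ?thesis using \<open>d > 0\<close> by auto
qed

lemma ode_solution_on_unique:
  assumes "open X" "locally_lipschitz_on X F"
    and sol1: "ode_solution_on F X t \<gamma>1" and sol2: "ode_solution_on F X t \<gamma>2"
    and "\<gamma>1 0 = \<gamma>2 0" "s \<in> {0..t}"
  shows "\<gamma>1 s = \<gamma>2 s"
proof -
  have "s \<le> t \<longrightarrow> \<gamma>1 s = \<gamma>2 s"
  proof (rule real_nonneg_induct[where P = "\<lambda>u. u \<le> t \<longrightarrow> \<gamma>1 u = \<gamma>2 u"])
    fix u :: real assume "u > 0" and IH: "\<forall>v\<in>{0..<u}. v \<le> t \<longrightarrow> \<gamma>1 v = \<gamma>2 v"
    show "u \<le> t \<longrightarrow> \<gamma>1 u = \<gamma>2 u"
    proof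
      assume "u \<le> t"
      then have "continuous_on {0..u} \<gamma>1" "continuous_on {0..u} \<gamma>2"
        using sol1 sol2 by (metis ode_solution_on_continuous_on ode_solution_on_subinterval)+
      then have "continuous_on {0..u} (\<lambda>v. \<gamma>1 v - \<gamma>2 v)"
        by (intro continuous_intros)
      then have "\<gamma>1 u - \<gamma>2 u \<in> {0}"
        by (rule continuous_on_closedin_endpoint[where X = UNIV])
          (use IH \<open>u > 0\<close> \<open>u \<le> t\<close> in auto)
      then show "\<gamma>1 u = \<gamma>2 u" by simp
    qed
  next
    fix u :: real assume "u \<ge> 0" and IH: "\<forall>v\<in>{0..u}. v \<le> t \<longrightarrow> \<gamma>1 v = \<gamma>2 v"
    show "\<exists>d>0. \<forall>v\<in>{u..u+d}. v \<le> t \<longrightarrow> \<gamma>1 v = \<gamma>2 v"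
    proof (cases "u < t")
      case True
      then have "\<gamma>1 u = \<gamma>2 u" using IH \<open>u \<ge> 0\<close> by simp
      then show ?thesis
        using ode_solution_on_unique_local[OF assms(1,2) sol1 sol2 \<open>u \<ge> 0\<close> True] by blast
    next
      case False
      then show ?thesis
        using IH \<open>u \<ge> 0\<close> by (intro exI[of _ 1]) auto
    qed
  qed (use assms(5,6) in auto)
  then show ?thesis using assms(6) by simp
qed

context
  fixes F :: "'a::banach \<Rightarrow> 'a" and z :: 'a and r L d :: real
  assumes lipschitz: "L-lipschitz_on (cball z r) F"
    and r_nonneg: "0 \<le> r" and d_pos: "0 < d"
    and d_range: "(norm (F z) + L * r) * d \<le> r"
    and d_contract: "L * d \<le> 1 / 2"
begin

(* The time argument is clamped to [0, d], so that the Picard operator acts on the complete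
   space of bounded continuous functions on all of R. *)
definition picard_step :: "(real \<Rightarrow>\<^sub>C 'a) \<Rightarrow> real \<Rightarrow> 'a" where
  "picard_step \<gamma> u = z + integral {0..max 0 (min d u)} (\<lambda>v. F (apply_bcontfun \<gamma> v))"

lemma picard_integrand_continuous:
  assumes "\<forall>v. apply_bcontfun \<gamma> v \<in> cball z r"
  shows "continuous_on T (\<lambda>v. F (apply_bcontfun \<gamma> v))"
  by (rule continuous_on_compose2[OF lipschitz_on_continuous_on[OF lipschitz]
        continuous_on_apply_bcontfun]) (use assms in auto)

lemma picard_field_bound:
  assumes "x \<in> cball z r"
  shows "norm (F x) \<le> norm (F z) + L * r"
proof -
  have "norm (F x) \<le> norm (F z) + norm (F x - F z)" by (rule norm_triangle_sub)
  also have "norm (F x - F z) \<le> L * norm (x - z)"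
    using lipschitz_onD[OF lipschitz assms, of z] r_nonneg by (simp add: dist_norm)
  also have "\<dots> \<le> L * r"
    using assms lipschitz_on_nonneg[OF lipschitz]
    by (intro mult_left_mono) (auto simp: dist_norm norm_minus_commute)
  finally show ?thesis by simp
qed

lemma picard_step_in_cball:
  assumes "\<forall>v. apply_bcontfun \<gamma> v \<in> cball z r"
  shows "picard_step \<gamma> u \<in> cball z r"
proof -
  let ?c = "max 0 (min d u)"
  have "norm (integral {0..?c} (\<lambda>v. F (apply_bcontfun \<gamma> v))) \<le> (norm (F z) + L * r) * (?c - 0)"
    using picard_integrand_continuous[OF assms] picard_field_bound assms by (intro integral_bound) auto
  also have "\<dots> \<le> (norm (F z) + L * r) * d"
    using d_pos r_nonneg lipschitz_on_nonneg[OF lipschitz] by (intro mult_left_mono) auto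
  finally show ?thesis
    using d_range by (simp add: picard_step_def dist_norm)
qed

lemma picard_step_bcontfun:
  assumes "\<forall>v. apply_bcontfun \<gamma> v \<in> cball z r"
  shows "picard_step \<gamma> \<in> bcontfun"
proof (rule bcontfun_normI)
  let ?I = "\<lambda>a. integral {0..a} (\<lambda>v. F (apply_bcontfun \<gamma> v))"
  have "continuous_on {0..d} ?I"
    by (rule indefinite_integral_continuous_1[OF integrable_continuous_real])
      (rule picard_integrand_continuous[OF assms])
  moreover have "continuous_on UNIV (\<lambda>u. max 0 (min d u))"
    by (intro continuous_on_max continuous_on_min continuous_on_const continuous_on_id)
  ultimately have "continuous_on UNIV (\<lambda>u. ?I (max 0 (min d u)))"
    by (rule continuous_on_compose2) (use d_pos in auto)
  then show "continuous_on UNIV (picard_step \<gamma>)"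
    unfolding picard_step_def by (rule continuous_on_add[OF continuous_on_const])
  show "norm (picard_step \<gamma> u) \<le> norm z + r" for u
    using picard_step_in_cball[OF assms, of u] norm_triangle_sub[of "picard_step \<gamma> u" z]
    by (simp add: dist_norm norm_minus_commute)
qed

lemma picard_step_contraction:
  assumes "\<forall>v. apply_bcontfun \<gamma>1 v \<in> cball z r" "\<forall>v. apply_bcontfun \<gamma>2 v \<in> cball z r"
  shows "dist (picard_step \<gamma>1 u) (picard_step \<gamma>2 u) \<le> 1 / 2 * dist \<gamma>1 \<gamma>2"
proof -
  let ?c = "max 0 (min d u)"
  let ?f1 = "\<lambda>v. F (apply_bcontfun \<gamma>1 v)" and ?f2 = "\<lambda>v. F (apply_bcontfun \<gamma>2 v)"
  have cont: "continuous_on {0..?c} ?f1" "continuous_on {0..?c} ?f2"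
    using picard_integrand_continuous assms by auto
  have "dist (picard_step \<gamma>1 u) (picard_step \<gamma>2 u) = norm (integral {0..?c} (\<lambda>v. ?f1 v - ?f2 v))"
    using integral_diff[OF integrable_continuous_real integrable_continuous_real, OF cont]
    by (simp add: picard_step_def dist_norm)
  also have "\<dots> \<le> (L * dist \<gamma>1 \<gamma>2) * (?c - 0)"
  proof (rule integral_bound)
    fix v
    have "norm (?f1 v - ?f2 v) \<le> L * dist (apply_bcontfun \<gamma>1 v) (apply_bcontfun \<gamma>2 v)"
      using lipschitz_onD[OF lipschitz] assms by (simp add: dist_norm)
    also have "\<dots> \<le> L * dist \<gamma>1 \<gamma>2"
      using dist_bounded lipschitz_on_nonneg[OF lipschitz] by (rule mult_left_mono)
    finally show "norm (?f1 v - ?f2 v) \<le> L * dist \<gamma>1 \<gamma>2" .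
  qed (use cont in \<open>auto intro: continuous_on_diff\<close>)
  also have "\<dots> \<le> (L * dist \<gamma>1 \<gamma>2) * d"
    using d_pos lipschitz_on_nonneg[OF lipschitz] by (intro mult_left_mono) auto
  also have "\<dots> \<le> 1 / 2 * dist \<gamma>1 \<gamma>2"
    using mult_right_mono[OF d_contract zero_le_dist] by (simp add: ac_simps)
  finally show ?thesis .
qed

lemma picard_step_fixpoint:
  obtains \<gamma> where "\<forall>v. apply_bcontfun \<gamma> v \<in> cball z r" "\<And>u. apply_bcontfun \<gamma> u = picard_step \<gamma> u"
proof -
  define S :: "(real \<Rightarrow>\<^sub>C 'a) set" where "S = PiC UNIV (\<lambda>_. cball z r)"
  have S_iff: "\<gamma> \<in> S \<longleftrightarrow> (\<forall>v. apply_bcontfun \<gamma> v \<in> cball z r)" for \<gamma> :: "real \<Rightarrow>\<^sub>C 'a"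
    unfolding S_def mem_PiC_iff by (simp add: Pi_iff)
  define Q where "Q \<gamma> = Bcontfun (picard_step \<gamma>)" for \<gamma> :: "real \<Rightarrow>\<^sub>C 'a"
  have Q_apply: "apply_bcontfun (Q \<gamma>) = picard_step \<gamma>" if "\<gamma> \<in> S" for \<gamma>
    using picard_step_bcontfun that by (simp add: Q_def S_iff Bcontfun_inverse)
  have complete: "complete S"
    unfolding complete_eq_closed S_def by (rule closed_PiC) simp
  have nonempty: "S \<noteq> {}"
    using S_iff[of "const_bcontfun z"] r_nonneg by auto
  have maps_to: "Q ` S \<subseteq> S"
    using Q_apply picard_step_in_cball by (auto simp: S_iff)
  have contraction: "dist (Q \<gamma>1) (Q \<gamma>2) \<le> 1 / 2 * dist \<gamma>1 \<gamma>2" if "\<gamma>1 \<in> S" "\<gamma>2 \<in> S" for \<gamma>1 \<gamma>2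
    using that picard_step_contraction by (intro dist_bound) (simp add: Q_apply S_iff)
  have "\<exists>!\<gamma>\<in>S. Q \<gamma> = \<gamma>"
    by (rule Banach_fix[OF complete nonempty _ _ maps_to contraction]) auto
  then obtain \<gamma> where "\<gamma> \<in> S" "Q \<gamma> = \<gamma>"
    by blast
  then show thesis
    using that Q_apply S_iff by metis
qed

lemma picard_fixpoint_has_vector_derivative:
  assumes "\<forall>v. apply_bcontfun \<gamma> v \<in> cball z r" "\<And>u. apply_bcontfun \<gamma> u = picard_step \<gamma> u"
    and "s \<in> {0..d}"
  shows "(apply_bcontfun \<gamma> has_vector_derivative F (apply_bcontfun \<gamma> s)) (at s within {0..d})"
proof (rule has_vector_derivative_transform[OF \<open>s \<in> {0..d}\<close>])
  let ?f = "\<lambda>v. F (apply_bcontfun \<gamma> v)"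
  show "apply_bcontfun \<gamma> x = z + integral {0..x} ?f" if "x \<in> {0..d}" for x
    using that assms(2)[of x] by (simp add: picard_step_def)
  have "((\<lambda>x. integral {0..x} ?f) has_vector_derivative ?f s) (at s within {0..d})"
    using picard_integrand_continuous[OF assms(1)] \<open>s \<in> {0..d}\<close> by (rule integral_has_vector_derivative)
  from has_vector_derivative_add[OF has_vector_derivative_const this]
  show "((\<lambda>x. z + integral {0..x} ?f) has_vector_derivative ?f s) (at s within {0..d})"
    by simp
qed

lemma picard_local_solution:
  obtains \<psi> where "\<psi> 0 = z"
    "\<forall>s\<in>{0..d}. \<psi> s \<in> cball z r \<and> (\<psi> has_vector_derivative F (\<psi> s)) (at s within {0..d})"
proof -
  obtain \<gamma> where in_cball: "\<forall>v. apply_bcontfun \<gamma> v \<in> cball z r"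
    and fixpoint: "\<And>u. apply_bcontfun \<gamma> u = picard_step \<gamma> u"
    using picard_step_fixpoint by blast
  have "apply_bcontfun \<gamma> 0 = z"
    using d_pos fixpoint[of 0] by (simp add: picard_step_def)
  then show thesis
    using that in_cball picard_fixpoint_has_vector_derivative[OF in_cball fixpoint] by blast
qed

end

lemma ode_solution_on_exists:
  fixes F :: "'a::banach \<Rightarrow> 'a"
  assumes "open X" "locally_lipschitz_on X F" "z \<in> X"
  obtains d \<psi> where "d > 0" "\<psi> 0 = z" "ode_solution_on F X d \<psi>"
proof -
  obtain r L where "r > 0" "cball z r \<subseteq> X" and L: "L-lipschitz_on (cball z r) F"
    using locally_lipschitz_on_openE[OF assms(2,1,3)] by blast
  have "L \<ge> 0" using L by (rule lipschitz_on_nonneg)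
  define M where "M = norm (F z) + L * r + 1"
  define d where "d = min (r / M) (1 / (2 * (L + 1)))"
  have "M > 0" using \<open>r > 0\<close> \<open>L \<ge> 0\<close> by (simp add: M_def add_nonneg_pos)
  then have "d > 0" using \<open>r > 0\<close> \<open>L \<ge> 0\<close> by (simp add: d_def)
  have "(norm (F z) + L * r) * d \<le> M * (r / M)"
    using \<open>d > 0\<close> \<open>M > 0\<close> by (intro mult_mono) (auto simp: M_def d_def)
  then have range: "(norm (F z) + L * r) * d \<le> r"
    using \<open>M > 0\<close> by simp
  have "L * d \<le> L * (1 / (2 * (L + 1)))"
    using \<open>L \<ge> 0\<close> by (intro mult_left_mono) (auto simp: d_def)
  also have "\<dots> \<le> 1 / 2"
    using \<open>L \<ge> 0\<close> by (simp add: field_simps)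
  finally have contract: "L * d \<le> 1 / 2" .
  obtain \<psi> where "\<psi> 0 = z"
    "\<forall>s\<in>{0..d}. \<psi> s \<in> cball z r \<and> (\<psi> has_vector_derivative F (\<psi> s)) (at s within {0..d})"
    using picard_local_solution[OF L _ \<open>d > 0\<close> range contract] \<open>r > 0\<close> by auto
  then show thesis
    using that[OF \<open>d > 0\<close>] \<open>cball z r \<subseteq> X\<close> unfolding ode_solution_on_def by blast
qed

locale lipschitz_flow =
  fixes F :: "'a::banach \<Rightarrow> 'a" and X :: "'a set" and \<phi> :: "real \<Rightarrow> 'a \<Rightarrow> 'a"
  assumes open_domain: "open X"
    and locally_lipschitz: "locally_lipschitz_on X F"
    and flow_in_domain: "\<And>x \<tau>. x \<in> X \<Longrightarrow> \<tau> \<ge> 0 \<Longrightarrow> \<phi> \<tau> x \<in> X"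
    and flow_zero: "\<And>x. x \<in> X \<Longrightarrow> \<phi> 0 x = x"
    and flow_has_vector_derivative: "\<And>x \<tau>. x \<in> X \<Longrightarrow> \<tau> \<ge> 0 \<Longrightarrow>
      ((\<lambda>t. \<phi> t x) has_vector_derivative F (\<phi> \<tau> x)) (at \<tau> within {0..})"
begin

lemma flow_shift_solution:
  assumes "x \<in> X" "a \<ge> 0"
  shows "ode_solution_on F X t (\<lambda>s. \<phi> (a + s) x)"
  unfolding ode_solution_on_def
proof
  fix s assume s: "s \<in> {0..t}"
  then have "a + s \<ge> 0" using \<open>a \<ge> 0\<close> by simp
  have "((\<lambda>s. a + s) has_vector_derivative 1) (at s within {0..t})"
    by (auto intro!: derivative_eq_intros)
  moreover have "((\<lambda>t. \<phi> t x) has_vector_derivative F (\<phi> (a + s) x)) (at (a + s) within (\<lambda>s. a + s) ` {0..t})"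
    using \<open>a \<ge> 0\<close>
    by (intro has_vector_derivative_within_subset[OF flow_has_vector_derivative[OF \<open>x \<in> X\<close> \<open>a + s \<ge> 0\<close>]]) auto
  ultimately have "((\<lambda>s. \<phi> (a + s) x) has_vector_derivative F (\<phi> (a + s) x)) (at s within {0..t})"
    using vector_diff_chain_within by (fastforce simp: o_def)
  then show "\<phi> (a + s) x \<in> X \<and> ((\<lambda>s. \<phi> (a + s) x) has_vector_derivative F (\<phi> (a + s) x)) (at s within {0..t})"
    using flow_in_domain[OF \<open>x \<in> X\<close> \<open>a + s \<ge> 0\<close>] by simp
qed

lemma solution_eq_flow:
  assumes "ode_solution_on F X t \<gamma>" "\<gamma> 0 = \<phi> a x" "x \<in> X" "a \<ge> 0" "s \<in> {0..t}"
  shows "\<gamma> s = \<phi> (a + s) x"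
  using ode_solution_on_unique[OF open_domain locally_lipschitz assms(1) flow_shift_solution[OF assms(3,4)]]
    assms(2,5) by simp

lemma flow_add:
  assumes "x \<in> X" "a \<ge> 0" "s \<ge> 0"
  shows "\<phi> s (\<phi> a x) = \<phi> (a + s) x"
proof -
  have "\<phi> a x \<in> X" using flow_in_domain assms(1,2) .
  then have "ode_solution_on F X s (\<lambda>s. \<phi> s (\<phi> a x))"
    using flow_shift_solution[of "\<phi> a x" 0] by simp
  then show ?thesis
    using solution_eq_flow flow_zero[OF \<open>\<phi> a x \<in> X\<close>] assms by simp
qed

lemma forward_invariant_if_flow_invariant:
  assumes "S \<subseteq> X" and invariant: "\<And>x \<tau>. x \<in> S \<Longrightarrow> \<tau> \<ge> 0 \<Longrightarrow> \<phi> \<tau> x \<in> S"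
  shows "forward_invariant F X S"
  unfolding forward_invariant_iff_ode_solution_on
proof (intro ballI allI impI)
  fix x t \<gamma> s assume "x \<in> S" "\<gamma> 0 = x \<and> ode_solution_on F X t \<gamma>" "s \<in> {0..t}"
  moreover have "x \<in> X" "\<phi> 0 x = x" using \<open>x \<in> S\<close> \<open>S \<subseteq> X\<close> flow_zero by auto
  ultimately have "\<gamma> s = \<phi> s x" using solution_eq_flow[of t \<gamma> 0 x s] by auto
  then show "\<gamma> s \<in> S" using invariant \<open>x \<in> S\<close> \<open>s \<in> {0..t}\<close> by simp
qed

lemma flow_continuous_on: "x \<in> X \<Longrightarrow> continuous_on {0..t} (\<lambda>s. \<phi> s x)"
  using ode_solution_on_continuous_on[OF flow_shift_solution[of x 0]] by simp

lemma flow_invariant_if_field_agrees: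
  assumes G: "locally_lipschitz_on X G" and G_invariant: "forward_invariant G X B"
    and B_closed: "closedin (top_of_set X) B"
    and agree: "\<And>x. x \<in> B \<Longrightarrow> F x = G x"
    and "y \<in> B" "\<tau> \<ge> 0"
  shows "\<phi> \<tau> y \<in> B"
proof -
  have "B \<subseteq> X" using B_closed by (rule closedin_imp_subset)
  then have "y \<in> X" using \<open>y \<in> B\<close> by blast
  show ?thesis
  proof (rule real_nonneg_induct[where P = "\<lambda>u. \<phi> u y \<in> B"])
    show "\<phi> 0 y \<in> B" using flow_zero \<open>y \<in> X\<close> \<open>y \<in> B\<close> by simp
  next
    fix s :: real assume "s > 0" "\<forall>u\<in>{0..<s}. \<phi> u y \<in> B"
    then show "\<phi> s y \<in> B"
      using flow_continuous_on[OF \<open>y \<in> X\<close>] flow_in_domain[OF \<open>y \<in> X\<close>] B_closed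
      by (intro continuous_on_closedin_endpoint[where X = X]) auto
  next
    fix s :: real assume "s \<ge> 0" "\<forall>u\<in>{0..s}. \<phi> u y \<in> B"
    then have "\<phi> s y \<in> B" by simp
    then obtain d \<psi> where "d > 0" "\<psi> 0 = \<phi> s y" and \<psi>: "ode_solution_on G X d \<psi>"
      using ode_solution_on_exists[OF open_domain G] \<open>B \<subseteq> X\<close> by blast
    then have \<psi>_B: "\<forall>u\<in>{0..d}. \<psi> u \<in> B"
      using G_invariant \<open>\<phi> s y \<in> B\<close> \<open>d > 0\<close> \<psi> \<open>\<psi> 0 = \<phi> s y\<close>
      unfolding forward_invariant_iff_ode_solution_on by (metis less_imp_le)
    then have "ode_solution_on F X d \<psi>"
      using \<psi> agree unfolding ode_solution_on_def by simp
    have "\<phi> u y \<in> B" if "u \<in> {s..s+d}" for u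
    proof -
      have "u - s \<in> {0..d}" using that by auto
      then have "\<psi> (u - s) = \<phi> (s + (u - s)) y"
        using solution_eq_flow[OF \<open>ode_solution_on F X d \<psi>\<close> \<open>\<psi> 0 = \<phi> s y\<close> \<open>y \<in> X\<close> \<open>s \<ge> 0\<close>] by blast
      then have "\<phi> u y = \<psi> (u - s)" by simp
      then show ?thesis using \<psi>_B \<open>u - s \<in> {0..d}\<close> by simp
    qed
    then show "\<exists>d>0. \<forall>u\<in>{s..s+d}. \<phi> u y \<in> B" using \<open>d > 0\<close> by blast
  qed (rule \<open>\<tau> \<ge> 0\<close>)
qed

definition horizon_set :: "real \<Rightarrow> 'a set \<Rightarrow> 'a set \<Rightarrow> 'a set" where
  "horizon_set T S B = {x\<in>X. (\<forall>\<sigma>\<in>{0..T}. \<phi> \<sigma> x \<in> S) \<and> \<phi> T x \<in> B}"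

lemma horizon_set_subset: "T \<ge> 0 \<Longrightarrow> horizon_set T S B \<subseteq> X \<inter> S"
  unfolding horizon_set_def using flow_zero by force

lemma flow_invariant_horizon_set:
  assumes B_invariant: "\<And>y \<tau>. y \<in> B \<Longrightarrow> \<tau> \<ge> 0 \<Longrightarrow> \<phi> \<tau> y \<in> B"
    and "B \<subseteq> S" "T \<ge> 0" and x: "x \<in> horizon_set T S B" and "\<tau> \<ge> 0"
  shows "\<phi> \<tau> x \<in> horizon_set T S B"
proof -
  have "x \<in> X" using x by (simp add: horizon_set_def)
  have after_T: "\<phi> t x \<in> B" if "t \<ge> T" for t
    using flow_add[OF \<open>x \<in> X\<close> \<open>T \<ge> 0\<close>, of "t - T"] B_invariant[of "\<phi> T x" "t - T"] x that
    by (simp add: horizon_set_def)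
  have safe: "\<phi> t x \<in> S" if "t \<ge> 0" for t
    using x after_T[of t] \<open>B \<subseteq> S\<close> that by (cases "t \<le> T") (auto simp: horizon_set_def)
  have shift: "\<phi> \<sigma> (\<phi> \<tau> x) = \<phi> (\<tau> + \<sigma>) x" if "\<sigma> \<ge> 0" for \<sigma>
    using flow_add \<open>x \<in> X\<close> \<open>\<tau> \<ge> 0\<close> that by blast
  show ?thesis
    using flow_in_domain[OF \<open>x \<in> X\<close> \<open>\<tau> \<ge> 0\<close>] safe after_T shift \<open>\<tau> \<ge> 0\<close> \<open>T \<ge> 0\<close>
    by (auto simp: horizon_set_def)
qed

end

lemma locally_lipschitz_on_control_affine:
  fixes f :: "real^'n \<Rightarrow> real^'n" and g :: "real^'n \<Rightarrow> real^'m^'n" and k :: "real^'n \<Rightarrow> real^'m"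
  assumes "open X" "C1_on X f" "C1_on X g" "locally_lipschitz_on X k"
  shows "locally_lipschitz_on X (\<lambda>x. f x + g x *v k x)"
proof -
  have "locally_lipschitz_on X f" "locally_lipschitz_on X g"
    using assms(1-3) C1_on_imp_locally_lipschitz_on by blast+
  then show ?thesis
    using assms(4)
    by (intro locally_lipschitz_on_add locally_lipschitz_on_bounded_bilinear[OF bounded_bilinear_matrix_vector_mult])
qed

lemma locally_lipschitz_on_convex_blend:
  fixes k1 k2 :: "'a::metric_space \<Rightarrow> 'b::real_normed_vector"
  assumes "locally_lipschitz_on X \<eta>" "locally_lipschitz_on X k1" "locally_lipschitz_on X k2"
  shows "locally_lipschitz_on X (\<lambda>x. (1 - \<eta> x) *\<^sub>R k1 x + \<eta> x *\<^sub>R k2 x)"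
proof -
  have "(\<lambda>x. (1 - \<eta> x) *\<^sub>R k1 x + \<eta> x *\<^sub>R k2 x) = (\<lambda>x. k1 x + \<eta> x *\<^sub>R (k2 x - k1 x))"
    by (simp add: algebra_simps)
  then show ?thesis
    using assms
    by (simp add: locally_lipschitz_on_add locally_lipschitz_on_diff
        locally_lipschitz_on_bounded_bilinear[OF bounded_bilinear_scaleR])
qed

theorem lemma3:
  fixes f :: "real^'n \<Rightarrow> real^'n" and g :: "real^'n \<Rightarrow> real^'m^'n"
    and X :: "(real^'n) set" and U :: "(real^'m) set"
    and h hb \<eta> :: "real^'n \<Rightarrow> real"
    and kb ke ks :: "real^'n \<Rightarrow> real^'m"
    and \<phi> :: "real \<Rightarrow> real^'n \<Rightarrow> real^'n"
    and T :: real and CS CB CI :: "(real^'n) set"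
  assumes X_open: "open X"
    and f_C1: "C1_on X f" and g_C1: "C1_on X g"
    and U_poly: "polytope U"
    and h_C1: "C1_on X h"
    and CS_def: "CS = {x\<in>X. h x \<ge> 0}"
    and hb_C1: "C1_on X hb"
    and CB_def: "CB = {x\<in>X. hb x \<ge> 0}"
    and hb_grad: "\<forall>x\<in>frontier CB. \<exists>D. (hb has_derivative D) (at x) \<and> D \<noteq> (\<lambda>_. 0)"
    and CB_CS: "CB \<subseteq> CS"
    and kb_backup: "backup_controller f g U X CB kb"
    and ke_C1: "C1_on X ke" and ke_U: "\<forall>x\<in>X. ke x \<in> U"
    and eta_C1: "C1_on X \<eta>" and eta_range: "\<forall>x\<in>X. \<eta> x \<in> {0..1}"
    and eta_CB: "\<forall>x\<in>CB. \<eta> x = 1"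
    and ks_def: "ks = (\<lambda>x. (1 - \<eta> x) *\<^sub>R ke x + \<eta> x *\<^sub>R kb x)"
    and flow_X: "\<forall>x\<in>X. \<forall>\<tau>\<ge>0. \<phi> \<tau> x \<in> X"
    and flow_init: "\<forall>x\<in>X. \<phi> 0 x = x"
    and flow_ode: "\<forall>x\<in>X. \<forall>\<tau>\<ge>0.
        ((\<lambda>t. \<phi> t x) has_vector_derivative (f (\<phi> \<tau> x) + g (\<phi> \<tau> x) *v ks (\<phi> \<tau> x))) (at \<tau> within {0..})"
    and T_pos: "T > 0"
    and CI_def: "CI = {x\<in>X. (\<forall>\<tau>\<in>{0..T}. h (\<phi> \<tau> x) \<ge> 0) \<and> hb (\<phi> T x) \<ge> 0}"
  shows "controlled_invariant f g U X CI
       \<and> forward_invariant (\<lambda>x. f x + g x *v ks x) X CI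
       \<and> (\<forall>x\<in>CI. \<forall>\<tau>\<ge>0. \<phi> \<tau> x \<in> CI)
       \<and> CI \<subseteq> CS"
proof -
  have kb_C1: "C1_on X kb" and kb_U: "\<forall>x\<in>X. kb x \<in> U"
    and CB_invariant: "forward_invariant (\<lambda>x. f x + g x *v kb x) X CB"
    using kb_backup unfolding backup_controller_def by auto
  have lipschitz_kb: "locally_lipschitz_on X kb"
    using X_open kb_C1 by (rule C1_on_imp_locally_lipschitz_on)
  have "locally_lipschitz_on X ks"
    unfolding ks_def using X_open eta_C1 ke_C1 lipschitz_kb
    by (blast intro: locally_lipschitz_on_convex_blend C1_on_imp_locally_lipschitz_on)
  then interpret lipschitz_flow "\<lambda>x. f x + g x *v ks x" X \<phi>
    using X_open f_C1 g_C1 flow_X flow_init flow_ode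
    by unfold_locales (auto intro: locally_lipschitz_on_control_affine)
  have "closedin (top_of_set X) CB"
    unfolding CB_def by (rule closedin_superlevel_set[OF C1_on_imp_continuous_on[OF hb_C1]])
  then have CB_flow_invariant: "\<phi> \<tau> y \<in> CB" if "y \<in> CB" "\<tau> \<ge> 0" for y \<tau>
    using flow_invariant_if_field_agrees[OF _ CB_invariant] that eta_CB X_open f_C1 g_C1 lipschitz_kb
    by (auto simp: ks_def intro: locally_lipschitz_on_control_affine)
  have CI_eq: "CI = horizon_set T CS CB"
    using flow_in_domain T_pos unfolding CI_def CS_def CB_def horizon_set_def by auto
  have CI_flow_invariant: "\<forall>x\<in>CI. \<forall>\<tau>\<ge>0. \<phi> \<tau> x \<in> CI"
    unfolding CI_eq using flow_invariant_horizon_set[OF CB_flow_invariant CB_CS] T_pos by simp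
  have CI_subset: "CI \<subseteq> X \<inter> CS"
    unfolding CI_eq using horizon_set_subset T_pos by simp
  have "\<forall>x\<in>X. ks x \<in> U"
    using convexD[OF polytope_imp_convex[OF U_poly]] ke_U kb_U eta_range by (simp add: ks_def)
  moreover have "forward_invariant (\<lambda>x. f x + g x *v ks x) X CI"
    using CI_flow_invariant CI_subset by (intro forward_invariant_if_flow_invariant) auto
  ultimately show ?thesis
    using CI_flow_invariant CI_subset unfolding controlled_invariant_def by blast
qed

end
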